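(* Let $(F,\mathrm{wt})$ and $(F',\mathrm{wt}')$ be weighted forests such that $\tilde{\mathbf{X}}_F=\tilde{\mathbf{X}}_{F'}$. Then $\tilde{\mathbf{G}}_F=\tilde{\mathbf{G}}_{F'}$. In other words, the extended generalized degree polynomial $\tilde{\mathbf{G}}_F$ of a weighted forest is determined by its chromatic MacMahon symmetric function $\tilde{\mathbf{X}}_F$.
   Context: All graphs are finite, simple and undirected. A weighted graph $(G,\mathrm{wt})=(V,E,\mathrm{wt})$ is a graph $G=(V,E)$ together with a function $\mathrm{wt}\colon V\to\mathbb{P}$, where $\mathbb{P}$ is the set of positive integers; for $A\subseteq V$ write $\mathrm{wt}(A)=\sum_{v\in A}\mathrm{wt}(v)$. A weighted forest is a weighted graph whose underlying graph is acyclic. A proper coloring of $G$ is a map $\kappa\colon V\to\mathbb{P}$ with $\kappa(u)\neq\kappa(v)$ whenever $uv\in E$; $\mathrm{Col}(G)$ denotes the set of proper colorings. The chromatic MacMahon symmetric function of $(G,\mathrm{wt})$ is the formal power series in two alphabets of commuting indeterminates $x_1,x_2,\dots$ and $y_1,y_2,\dots$ $$\tilde{\mathbf{X}}_G=\sum_{\kappa\in\mathrm{Col}(G)}\prod_{v\in V}x_{\kappa(v)}\,y_{\kappa(v)}^{\mathrm{wt}(v)}.$$ For $A\subseteq V$, an edge is internal to $A$ if both endpoints lie in $A$ and external to $A$ if exactly one endpoint lies in $A$; $\mathrm{int}(A)$ and $\mathrm{ext}(A)$ denote the numbers of internal and external edges. The extended generalized degree polynomial of $(G,\mathrm{wt})$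 is $$\tilde{\mathbf{G}}_G(w,x,y,z)=\sum_{A\subseteq V}w^{\mathrm{ext}(A)}x^{|A|}y^{\mathrm{wt}(A)}z^{\mathrm{int}(A)}.$$ *)

theory Defs
  imports Main "HOL-Library.FuncSet"
begin

definition simple_graph :: "'a set \<Rightarrow> 'a set set \<Rightarrow> bool" where
  "simple_graph V E \<longleftrightarrow> finite V \<and>
     (\<forall>e\<in>E. \<exists>u v. u \<in> V \<and> v \<in> V \<and> u \<noteq> v \<and> e = {u, v})"

definition is_cycle :: "'a set \<Rightarrow> 'a set set \<Rightarrow> 'a list \<Rightarrow> bool" where
  "is_cycle V E cs \<longleftrightarrow> length cs \<ge> 3 \<and> distinct cs \<and> set cs \<subseteq> V \<and>
     (\<forall>i < length cs. {cs ! i, cs ! ((i + 1) mod length cs)} \<in> E)"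

definition forest :: "'a set \<Rightarrow> 'a set set \<Rightarrow> bool" where
  "forest V E \<longleftrightarrow> simple_graph V E \<and> \<not> (\<exists>cs. is_cycle V E cs)"

definition weighted_forest :: "'a set \<Rightarrow> 'a set set \<Rightarrow> ('a \<Rightarrow> nat) \<Rightarrow> bool" where
  "weighted_forest V E wt \<longleftrightarrow> forest V E \<and> (\<forall>v\<in>V. wt v > 0)"

definition proper_colorings :: "'a set \<Rightarrow> 'a set set \<Rightarrow> ('a \<Rightarrow> nat) set" where
  "proper_colorings V E =
     {\<kappa> \<in> V \<rightarrow>\<^sub>E {1..}. \<forall>u v. {u, v} \<in> E \<longrightarrow> \<kappa> u \<noteq> \<kappa> v}"

text \<open>A monomial \<open>\<Prod>\<^sub>c x_c^(a_c) y_c^(b_c)\<close> is encoded by its exponent map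
  \<open>m c = (a_c, b_c)\<close>; the coefficient is the number of proper colorings \<kappa> with
  \<open>(|\<kappa>\<inverse>(c)|, wt(\<kappa>\<inverse>(c))) = m c\<close> for every colour c.\<close>
definition chromatic_macmahon ::
    "'a set \<Rightarrow> 'a set set \<Rightarrow> ('a \<Rightarrow> nat) \<Rightarrow> (nat \<Rightarrow> nat \<times> nat) \<Rightarrow> nat" where
  "chromatic_macmahon V E wt m =
     card {\<kappa> \<in> proper_colorings V E.
             (\<lambda>c. (card {v \<in> V. \<kappa> v = c}, sum wt {v \<in> V. \<kappa> v = c})) = m}"

definition int_edges :: "'a set set \<Rightarrow> 'a set \<Rightarrow> nat" where
  "int_edges E A = card {e \<in> E. e \<subseteq> A}"

definition ext_edges :: "'a set set \<Rightarrow> 'a set \<Rightarrow> nat" where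
  "ext_edges E A = card {e \<in> E. card (e \<inter> A) = 1}"

text \<open>The extended generalized degree polynomial, represented by its coefficient function:
  the coefficient of \<open>w^a x^b y^c z^d\<close> is the number of A \<subseteq> V with
  ext(A)=a, |A|=b, wt(A)=c, int(A)=d.\<close>
definition ext_gen_degree_poly ::
    "'a set \<Rightarrow> 'a set set \<Rightarrow> ('a \<Rightarrow> nat) \<Rightarrow> nat \<times> nat \<times> nat \<times> nat \<Rightarrow> nat" where
  "ext_gen_degree_poly V E wt =
     (\<lambda>(a, b, c, d). card {A. A \<subseteq> V \<and> ext_edges E A = a \<and> card A = b \<and>
                               sum wt A = c \<and> int_edges E A = d})"

end

theory Submission
  imports Defs Complex_Main
begin

text \<open>Removing leaves shows that with \<open>k\<close> colors the subforest induced on \<open>U\<close> has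
  \<open>k\<^bsup>|U| - int(U)\<^esup> (k - 1)\<^bsup>int(U)\<^esup>\<close> proper colorings. Color the forest with colors from
  disjoint sets \<open>C\<^sub>1\<close>, \<open>C\<^sub>2\<close> of sizes \<open>r\<^sub>1\<close>, \<open>r\<^sub>2\<close> and let \<open>A\<close> be the set of vertices
  colored from \<open>C\<^sub>1\<close>. The number of such colorings with \<open>|A| = b\<close> and \<open>wt(A) = w\<close> is a
  sum of coefficients of the chromatic MacMahon function, and it equals \<open>r\<^sub>1\<^bsup>b\<^esup> r\<^sub>2\<^bsup>|V| - b\<^esup>\<close>
  times \<open>\<Sum>\<^sub>A u\<^sub>1\<^bsup>int(A)\<^esup> u\<^sub>2\<^bsup>int(V - A)\<^esup>\<close> with \<open>u\<^sub>k = 1 - 1/r\<^sub>k\<close>. As \<open>u\<^sub>1\<close>, \<open>u\<^sub>2\<close> range over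
  an infinite set, the function determines how many \<open>A\<close> have given \<open>|A|\<close>, \<open>wt(A)\<close>,
  \<open>int(A)\<close> and \<open>int(V - A)\<close>. Since \<open>ext(A) = |E| - int(A) - int(V - A)\<close>, and \<open>|E|\<close> is
  \<open>int(V - A)\<close> for \<open>A = {}\<close>, this determines the extended generalized degree polynomial.\<close>

lemma simple_graph_finite: "simple_graph V E \<Longrightarrow> finite V"
  unfolding simple_graph_def by simp

lemma simple_graph_edgeE:
  assumes "simple_graph V E" "e \<in> E"
  obtains u v where "u \<in> V" "v \<in> V" "u \<noteq> v" "e = {u, v}"
  using assms unfolding simple_graph_def by blast

lemma simple_graph_edges_subset: "simple_graph V E \<Longrightarrow> E \<subseteq> Pow V"
  unfolding simple_graph_def by auto

lemma simple_graph_finite_edges: "simple_graph V E \<Longrightarrow> finite E"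
  by (meson finite_Pow_iff finite_subset simple_graph_edges_subset simple_graph_finite)

lemma simple_graph_no_loop: "simple_graph V E \<Longrightarrow> {v} \<notin> E"
  by (metis doubleton_eq_iff insert_absorb2 simple_graph_edgeE)

lemma forest_simple_graph: "forest V E \<Longrightarrow> simple_graph V E"
  unfolding forest_def by simp

lemma int_edges_le_card_edges: "simple_graph V E \<Longrightarrow> int_edges E A \<le> card E"
  unfolding int_edges_def by (intro card_mono simple_graph_finite_edges) auto

lemma int_edges_empty: "simple_graph V E \<Longrightarrow> int_edges E {} = 0"
  unfolding int_edges_def by (auto elim: simple_graph_edgeE)

lemma int_edges_all: "simple_graph V E \<Longrightarrow> int_edges E V = card E"
  unfolding int_edges_def using simple_graph_edges_subset
  by (metis (no_types, lifting) Collect_cong Collect_mem_eq PowD subsetD)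

lemma int_edges_insert:
  assumes G: "simple_graph V E" and v: "v \<notin> U"
  shows "int_edges E (insert v U) = int_edges E U + card {u \<in> U. {u, v} \<in> E}"
proof -
  let ?N = "{u \<in> U. {u, v} \<in> E}"
  have at_v: "{e \<in> E. e \<subseteq> insert v U \<and> v \<in> e} = (\<lambda>u. {u, v}) ` ?N"
  proof (intro equalityI subsetI)
    fix e assume "e \<in> {e \<in> E. e \<subseteq> insert v U \<and> v \<in> e}"
    then show "e \<in> (\<lambda>u. {u, v}) ` ?N"
      using G by (elim CollectE conjE simple_graph_edgeE) (auto simp: insert_commute)
  qed (use v in auto)
  have "inj_on (\<lambda>u. {u, v}) ?N"
    using v by (auto intro!: inj_onI simp: doubleton_eq_iff)
  then have card_at_v: "card {e \<in> E. e \<subseteq> insert v U \<and> v \<in> e} = card ?N"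
    by (simp add: at_v card_image)
  have "{e \<in> E. e \<subseteq> insert v U} = {e \<in> E. e \<subseteq> U} \<union> {e \<in> E. e \<subseteq> insert v U \<and> v \<in> e}"
    using v by auto
  moreover have "finite E" using G by (rule simple_graph_finite_edges)
  ultimately show ?thesis
    unfolding int_edges_def card_at_v[symmetric] using v
    by (subst card_Un_disjoint[symmetric]) auto
qed

definition path_in :: "'a set set \<Rightarrow> 'a set \<Rightarrow> 'a list \<Rightarrow> bool" where
  "path_in E U xs \<longleftrightarrow> xs \<noteq> [] \<and> distinct xs \<and> set xs \<subseteq> U \<and>
     (\<forall>i. Suc i < length xs \<longrightarrow> {xs ! i, xs ! Suc i} \<in> E)"

lemma longest_path_in:
  assumes "finite U" "U \<noteq> {}"
  obtains xs where "path_in E U xs" "\<And>ys. path_in E U ys \<Longrightarrow> length ys \<le> length xs"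
proof -
  obtain u where "u \<in> U" using assms(2) by blast
  then have "path_in E U [u]" unfolding path_in_def by simp
  moreover have "length ys < Suc (card U)" if "path_in E U ys" for ys
    using that assms(1) unfolding path_in_def by (metis card_mono distinct_card le_imp_less_Suc)
  ultimately show ?thesis
    using ex_has_greatest_nat[of "path_in E U" "[u]" length "Suc (card U)"] that by blast
qed

lemma longest_path_in_start_neighbor:
  assumes xs: "path_in E U xs" and longest: "\<And>ys. path_in E U ys \<Longrightarrow> length ys \<le> length xs"
    and y: "y \<in> U" "{hd xs, y} \<in> E"
  shows "y \<in> set xs"
proof (rule ccontr)
  assume "y \<notin> set xs"
  with xs y have "path_in E U (y # xs)"
    unfolding path_in_def by (auto simp: nth_Cons hd_conv_nth insert_commute split: nat.split)
  then show False using longest by fastforce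
qed

lemma path_in_closing_edge_cycle:
  assumes xs: "path_in E U xs" and "U \<subseteq> V"
    and i: "2 \<le> i" "i < length xs" and closing: "{xs ! 0, xs ! i} \<in> E"
  shows "is_cycle V E (take (Suc i) xs)"
  unfolding is_cycle_def
proof (intro conjI allI impI)
  let ?cs = "take (Suc i) xs"
  have len: "length ?cs = Suc i" using i by simp
  show "3 \<le> length ?cs" "distinct ?cs" "set ?cs \<subseteq> V"
    using xs i len \<open>U \<subseteq> V\<close> unfolding path_in_def by (auto dest: in_set_takeD)
  fix j assume "j < length ?cs"
  then consider "j < i" | "j = i" using len by linarith
  then show "{?cs ! j, ?cs ! ((j + 1) mod length ?cs)} \<in> E"
  proof cases
    case 1
    then show ?thesis using xs i len unfolding path_in_def by simp
  next
    case 2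
    then show ?thesis using closing len by (simp add: insert_commute)
  qed
qed

text \<open>The first vertex of a longest path is a leaf: a second neighbor would lie further
  along the path and close a cycle.\<close>
lemma forest_has_leaf:
  assumes F: "forest V E" and "U \<subseteq> V" "U \<noteq> {}"
  shows "\<exists>v\<in>U. card {u \<in> U. {u, v} \<in> E} \<le> 1"
proof -
  have G: "simple_graph V E" using F by (rule forest_simple_graph)
  have "finite U" using G \<open>U \<subseteq> V\<close> simple_graph_finite finite_subset by blast
  then obtain xs where xs: "path_in E U xs"
    and longest: "\<And>ys. path_in E U ys \<Longrightarrow> length ys \<le> length xs"
    using longest_path_in \<open>U \<noteq> {}\<close> by blast
  let ?v = "xs ! 0"
  have v: "?v \<in> U" "hd xs = ?v" using xs unfolding path_in_def by (auto simp: hd_conv_nth)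
  have "y1 = y2" if y: "y1 \<in> U" "{y1, ?v} \<in> E" "y2 \<in> U" "{y2, ?v} \<in> E" for y1 y2
  proof (rule ccontr)
    assume "y1 \<noteq> y2"
    have "y1 \<in> set xs" "y2 \<in> set xs"
      using longest_path_in_start_neighbor[OF xs longest] y v by (auto simp: insert_commute)
    then obtain i1 i2 where i: "i1 < length xs" "xs ! i1 = y1" "i2 < length xs" "xs ! i2 = y2"
      by (meson in_set_conv_nth)
    have "y1 \<noteq> ?v" "y2 \<noteq> ?v" using y simple_graph_no_loop[OF G] by auto
    then have "i1 \<noteq> 0" "i2 \<noteq> 0" "i1 \<noteq> i2" using i \<open>y1 \<noteq> y2\<close> by metis+
    then obtain i where "2 \<le> i" "i < length xs" "{?v, xs ! i} \<in> E"
      using i y by (metis insert_commute One_nat_def Suc_1 Suc_leI neq0_conv less_one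
          linorder_neqE_nat not_le)
    then have "is_cycle V E (take (Suc i) xs)"
      using path_in_closing_edge_cycle[OF xs \<open>U \<subseteq> V\<close>] by blast
    then show False using F unfolding forest_def by blast
  qed
  then have "card {u \<in> U. {u, ?v} \<in> E} \<le> Suc 0"
    using \<open>finite U\<close> by (subst card_le_Suc0_iff_eq) auto
  then show ?thesis using v by auto
qed

definition colorings_on :: "'a set set \<Rightarrow> 'a set \<Rightarrow> 'c set \<Rightarrow> ('a \<Rightarrow> 'c) set" where
  "colorings_on E U C =
     {\<kappa> \<in> U \<rightarrow>\<^sub>E C. \<forall>u v. {u, v} \<in> E \<longrightarrow> u \<in> U \<longrightarrow> v \<in> U \<longrightarrow> \<kappa> u \<noteq> \<kappa> v}"

lemma finite_colorings_on: "finite U \<Longrightarrow> finite C \<Longrightarrow> finite (colorings_on E U C)"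
  unfolding colorings_on_def by (rule finite_subset[OF _ finite_PiE[of U "\<lambda>_. C"]]) auto

lemma colorings_on_empty: "colorings_on E {} C = {\<lambda>_. undefined}"
  unfolding colorings_on_def by auto

lemma colorings_on_insert_bij:
  assumes v: "v \<notin> U" "{v} \<notin> E"
  shows "bij_betw (\<lambda>(\<kappa>, c). \<kappa>(v := c))
           (SIGMA \<kappa>:colorings_on E U C. C - \<kappa> ` {u \<in> U. {u, v} \<in> E})
           (colorings_on E (insert v U) C)"
  (is "bij_betw _ (SIGMA \<kappa>:_. C - \<kappa> ` ?N) _")
proof (rule bij_betw_byWitness[where f' = "\<lambda>\<kappa>. (\<kappa>(v := undefined), \<kappa> v)"])
  show "(\<lambda>(\<kappa>, c). \<kappa>(v := c)) ` (SIGMA \<kappa>:colorings_on E U C. C - \<kappa> ` ?N)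
          \<subseteq> colorings_on E (insert v U) C"
  proof (rule image_subsetI, clarify)
    fix \<kappa> c assume \<kappa>: "\<kappa> \<in> colorings_on E U C" and c: "c \<in> C" "c \<notin> \<kappa> ` ?N"
    have "(\<kappa>(v := c)) a \<noteq> (\<kappa>(v := c)) b" if "{a, b} \<in> E" "a \<in> insert v U" "b \<in> insert v U" for a b
      using that v \<kappa> c unfolding colorings_on_def by (auto simp: insert_commute)
    moreover have "\<kappa>(v := c) \<in> insert v U \<rightarrow>\<^sub>E C"
      using \<kappa> c v unfolding colorings_on_def by (auto simp: PiE_iff extensional_def)
    ultimately show "\<kappa>(v := c) \<in> colorings_on E (insert v U) C"
      unfolding colorings_on_def by blast
  qed
  show "(\<lambda>\<kappa>. (\<kappa>(v := undefined), \<kappa> v)) ` colorings_on E (insert v U) C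
          \<subseteq> (SIGMA \<kappa>:colorings_on E U C. C - \<kappa> ` ?N)"
  proof (rule image_subsetI)
    fix \<kappa> assume \<kappa>: "\<kappa> \<in> colorings_on E (insert v U) C"
    have proper: "\<kappa> a \<noteq> \<kappa> b" if "{a, b} \<in> E" "a \<in> insert v U" "b \<in> insert v U" for a b
      using \<kappa> that unfolding colorings_on_def by blast
    have "\<kappa>(v := undefined) \<in> colorings_on E U C"
      using \<kappa> v proper unfolding colorings_on_def by (auto simp: PiE_iff extensional_def)
    moreover have "\<kappa> v \<in> C" using \<kappa> unfolding colorings_on_def by auto
    moreover have "(\<kappa>(v := undefined)) ` ?N = \<kappa> ` ?N" using v by auto
    moreover have "\<kappa> v \<notin> \<kappa> ` ?N" using proper by fastforce
    ultimately show "(\<kappa>(v := undefined), \<kappa> v) \<in> (SIGMA \<kappa>:colorings_on E U C. C - \<kappa> ` ?N)"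
      by simp
  qed
qed (use v in \<open>auto simp: colorings_on_def PiE_iff extensional_def\<close>)

lemma card_colorings_on_insert:
  assumes v: "v \<notin> U" "{v} \<notin> E" and fin: "finite U" "finite C"
    and N: "card {u \<in> U. {u, v} \<in> E} \<le> 1"
  shows "card (colorings_on E (insert v U) C) =
           card (colorings_on E U C) * (card C - card {u \<in> U. {u, v} \<in> E})"
proof -
  let ?N = "{u \<in> U. {u, v} \<in> E}"
  let ?free = "\<lambda>\<kappa>. C - \<kappa> ` ?N"
  have "bij_betw (\<lambda>(\<kappa>, c). \<kappa>(v := c)) (SIGMA \<kappa>:colorings_on E U C. ?free \<kappa>)
          (colorings_on E (insert v U) C)"
    using v by (rule colorings_on_insert_bij)
  then have "card (colorings_on E (insert v U) C) = (\<Sum>\<kappa>\<in>colorings_on E U C. card (?free \<kappa>))"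
    using fin by (simp add: bij_betw_same_card[symmetric] finite_colorings_on)
  also have "\<dots> = (\<Sum>\<kappa>\<in>colorings_on E U C. card C - card ?N)"
  proof (rule sum.cong[OF refl])
    fix \<kappa> assume "\<kappa> \<in> colorings_on E U C"
    then have "\<kappa> ` ?N \<subseteq> C" unfolding colorings_on_def by auto
    moreover have "card (\<kappa> ` ?N) = card ?N"
      using N fin by (intro card_image) (auto simp: inj_on_def card_le_Suc0_iff_eq)
    ultimately show "card (?free \<kappa>) = card C - card ?N"
      using fin by (simp add: card_Diff_subset finite_subset)
  qed
  finally show ?thesis by simp
qed

lemma forest_int_edges_le_card:
  assumes F: "forest V E" and "U \<subseteq> V"
  shows "int_edges E U \<le> card U"
proof -
  have G: "simple_graph V E" using F by (rule forest_simple_graph)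
  have "finite U" using G \<open>U \<subseteq> V\<close> simple_graph_finite finite_subset by blast
  then show ?thesis using \<open>U \<subseteq> V\<close>
  proof (induction rule: finite_remove_induct)
    case empty
    show ?case using int_edges_empty[OF G] by simp
  next
    case (remove A)
    then obtain v where v: "v \<in> A" and leaf: "card {u \<in> A. {u, v} \<in> E} \<le> 1"
      using forest_has_leaf[OF F] by blast
    have N: "{u \<in> A - {v}. {u, v} \<in> E} = {u \<in> A. {u, v} \<in> E}"
      using simple_graph_no_loop[OF G] by auto
    have "int_edges E A = int_edges E (A - {v}) + card {u \<in> A. {u, v} \<in> E}"
      using int_edges_insert[OF G, of v "A - {v}"] v N by (simp add: insert_absorb)
    moreover have "int_edges E (A - {v}) \<le> card (A - {v})" using remove.IH[OF v] remove.prems by blast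
    moreover have "card A = Suc (card (A - {v}))" using card_Suc_Diff1[OF remove.hyps(1) v] by simp
    ultimately show ?case using leaf by linarith
  qed
qed

lemma card_colorings_on_forest:
  assumes F: "forest V E" and "U \<subseteq> V" and "finite C"
  shows "card (colorings_on E U C) =
           card C ^ (card U - int_edges E U) * (card C - 1) ^ int_edges E U"
proof -
  have G: "simple_graph V E" using F by (rule forest_simple_graph)
  have "finite U" using G \<open>U \<subseteq> V\<close> simple_graph_finite finite_subset by blast
  then show ?thesis using \<open>U \<subseteq> V\<close>
  proof (induction rule: finite_remove_induct)
    case empty
    show ?case using int_edges_empty[OF G] by (simp add: colorings_on_empty)
  next
    case (remove A)
    then obtain v where v: "v \<in> A" and leaf: "card {u \<in> A. {u, v} \<in> E} \<le> 1"
      using forest_has_leaf[OF F] by blast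
    let ?A' = "A - {v}" and ?n = "card {u \<in> A. {u, v} \<in> E}"
    have N: "{u \<in> ?A'. {u, v} \<in> E} = {u \<in> A. {u, v} \<in> E}"
      using simple_graph_no_loop[OF G] by auto
    have A: "insert v ?A' = A" using v by blast
    have ints: "int_edges E A = int_edges E ?A' + ?n"
      using int_edges_insert[OF G, of v ?A'] N A by simp
    have cols: "card (colorings_on E A C) = card (colorings_on E ?A' C) * (card C - ?n)"
      using card_colorings_on_insert[of v ?A' E C] N A leaf remove.hyps(1) \<open>finite C\<close>
        simple_graph_no_loop[OF G] by simp
    have IH: "card (colorings_on E ?A' C) =
        card C ^ (card ?A' - int_edges E ?A') * (card C - 1) ^ int_edges E ?A'"
      using remove.IH[OF v] remove.prems by blast
    have le: "int_edges E ?A' \<le> card ?A'"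
      using forest_int_edges_le_card[OF F, of ?A'] remove.prems by blast
    have card: "card A = Suc (card ?A')" using card_Suc_Diff1[OF remove.hyps(1) v] by simp
    from leaf consider "?n = 0" | "?n = 1" by linarith
    then show ?case
    proof cases
      case 1
      then show ?thesis using ints cols IH le card by (simp add: Suc_diff_le)
    next
      case 2
      then show ?thesis using ints cols IH le card by simp
    qed
  qed
qed

definition color_class_profile :: "'a set \<Rightarrow> ('a \<Rightarrow> nat) \<Rightarrow> ('a \<Rightarrow> nat) \<Rightarrow> nat \<Rightarrow> nat \<times> nat" where
  "color_class_profile V wt \<kappa> = (\<lambda>c. (card {v \<in> V. \<kappa> v = c}, sum wt {v \<in> V. \<kappa> v = c}))"

lemma card_colorings_with_profile:
  assumes fin: "finite {\<kappa> \<in> proper_colorings V E. Q (color_class_profile V wt \<kappa>)}"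
  shows "card {\<kappa> \<in> proper_colorings V E. Q (color_class_profile V wt \<kappa>)} =
           (\<Sum>m | Q m \<and> chromatic_macmahon V E wt m \<noteq> 0. chromatic_macmahon V E wt m)"
proof -
  let ?T = "{\<kappa> \<in> proper_colorings V E. Q (color_class_profile V wt \<kappa>)}"
  let ?fiber = "\<lambda>m. {\<kappa> \<in> proper_colorings V E. color_class_profile V wt \<kappa> = m}"
  have cm: "chromatic_macmahon V E wt m = card (?fiber m)" for m
    unfolding chromatic_macmahon_def color_class_profile_def ..
  have fiber: "{\<kappa> \<in> ?T. color_class_profile V wt \<kappa> = m} = ?fiber m" if "Q m" for m
    using that by auto
  have "?fiber m \<noteq> {} \<longleftrightarrow> chromatic_macmahon V E wt m \<noteq> 0" if "Q m" for m
    using fin fiber[OF that] unfolding cm by (metis (no_types, lifting) card_0_eq finite_subset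
        mem_Collect_eq subsetI)
  then have image: "color_class_profile V wt ` ?T = {m. Q m \<and> chromatic_macmahon V E wt m \<noteq> 0}"
    by auto
  have "card ?T = (\<Sum>m\<in>color_class_profile V wt ` ?T. card {\<kappa> \<in> ?T. color_class_profile V wt \<kappa> = m})"
    using sum.image_gen[OF fin, of "\<lambda>_. 1::nat"] by simp
  also have "\<dots> = (\<Sum>m | Q m \<and> chromatic_macmahon V E wt m \<noteq> 0. chromatic_macmahon V E wt m)"
    unfolding image
  proof (rule sum.cong[OF refl])
    fix m assume "m \<in> {m. Q m \<and> chromatic_macmahon V E wt m \<noteq> 0}"
    then show "card {\<kappa> \<in> ?T. color_class_profile V wt \<kappa> = m} = chromatic_macmahon V E wt m"
      unfolding cm by (subst fiber) simp_all
  qed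
  finally show ?thesis .
qed

lemma chromatic_macmahon_determines_card:
  assumes "chromatic_macmahon V E wt = chromatic_macmahon V' E' wt'"
    and "finite {\<kappa> \<in> proper_colorings V E. Q (color_class_profile V wt \<kappa>)}"
    and "finite {\<kappa> \<in> proper_colorings V' E'. Q (color_class_profile V' wt' \<kappa>)}"
  shows "card {\<kappa> \<in> proper_colorings V E. Q (color_class_profile V wt \<kappa>)} =
           card {\<kappa> \<in> proper_colorings V' E'. Q (color_class_profile V' wt' \<kappa>)}"
  using assms by (simp add: card_colorings_with_profile)

lemma colorings_on_eq_proper_colorings:
  assumes "simple_graph V E" "C \<subseteq> {1..}"
  shows "colorings_on E V C = {\<kappa> \<in> proper_colorings V E. \<forall>v\<in>V. \<kappa> v \<in> C}"
proof -
  have "{u, v} \<in> E \<Longrightarrow> u \<in> V \<and> v \<in> V" for u v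
    using simple_graph_edges_subset[OF assms(1)] by auto
  then show ?thesis
    using assms(2) unfolding colorings_on_def proper_colorings_def by (auto simp: PiE_iff)
qed

lemma sum_over_color_classes:
  assumes "finite V" "finite C"
  shows "(\<Sum>c\<in>C. sum h {v \<in> V. \<kappa> v = c}) = sum h {v \<in> V. \<kappa> v \<in> C}"
proof -
  have "(\<Sum>c\<in>C. sum h {v \<in> {v \<in> V. \<kappa> v \<in> C}. \<kappa> v = c}) = sum h {v \<in> V. \<kappa> v \<in> C}"
    using assms by (intro sum.group) auto
  moreover have "{v \<in> {v \<in> V. \<kappa> v \<in> C}. \<kappa> v = c} = {v \<in> V. \<kappa> v = c}" if "c \<in> C" for c
    using that by auto
  ultimately show ?thesis by simp
qed

definition split_colorings ::
    "'a set \<Rightarrow> 'a set set \<Rightarrow> ('a \<Rightarrow> nat) \<Rightarrow> nat set \<Rightarrow> nat set \<Rightarrow> nat \<Rightarrow> nat \<Rightarrow> ('a \<Rightarrow> nat) set" where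
  "split_colorings V E wt C\<^sub>1 C\<^sub>2 b w =
     {\<kappa> \<in> colorings_on E V (C\<^sub>1 \<union> C\<^sub>2). card {v \<in> V. \<kappa> v \<in> C\<^sub>1} = b \<and> sum wt {v \<in> V. \<kappa> v \<in> C\<^sub>1} = w}"

lemma split_colorings_by_profile:
  assumes G: "simple_graph V E" and C: "C\<^sub>1 \<union> C\<^sub>2 \<subseteq> {1..}" "finite C\<^sub>1"
  shows "split_colorings V E wt C\<^sub>1 C\<^sub>2 b w =
    {\<kappa> \<in> proper_colorings V E. (\<lambda>m. (\<forall>c. c \<notin> C\<^sub>1 \<union> C\<^sub>2 \<longrightarrow> fst (m c) = 0) \<and>
        (\<Sum>c\<in>C\<^sub>1. fst (m c)) = b \<and> (\<Sum>c\<in>C\<^sub>1. snd (m c)) = w) (color_class_profile V wt \<kappa>)}"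
proof -
  have V: "finite V" using G by (rule simple_graph_finite)
  have "(\<forall>v\<in>V. \<kappa> v \<in> C\<^sub>1 \<union> C\<^sub>2) \<longleftrightarrow> (\<forall>c. c \<notin> C\<^sub>1 \<union> C\<^sub>2 \<longrightarrow> card {v \<in> V. \<kappa> v = c} = 0)" for \<kappa>
    using V by auto
  moreover have "card {v \<in> V. \<kappa> v \<in> C\<^sub>1} = (\<Sum>c\<in>C\<^sub>1. card {v \<in> V. \<kappa> v = c})"
    and "sum wt {v \<in> V. \<kappa> v \<in> C\<^sub>1} = (\<Sum>c\<in>C\<^sub>1. sum wt {v \<in> V. \<kappa> v = c})" for \<kappa>
    by (simp_all only: card_eq_sum sum_over_color_classes[OF V C(2)])
  ultimately show ?thesis
    unfolding split_colorings_def colorings_on_eq_proper_colorings[OF G C(1)]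
      color_class_profile_def by auto
qed

lemma card_split_colorings_transfer:
  assumes "simple_graph V E" "simple_graph V' E'"
    and cm: "chromatic_macmahon V E wt = chromatic_macmahon V' E' wt'"
    and C: "C\<^sub>1 \<union> C\<^sub>2 \<subseteq> {1..}" "finite C\<^sub>1" "finite C\<^sub>2"
  shows "card (split_colorings V E wt C\<^sub>1 C\<^sub>2 b w) = card (split_colorings V' E' wt' C\<^sub>1 C\<^sub>2 b w)"
proof -
  have "finite (split_colorings V E wt C\<^sub>1 C\<^sub>2 b w)"
    using finite_colorings_on[OF simple_graph_finite[OF assms(1)], of "C\<^sub>1 \<union> C\<^sub>2" E] C
    unfolding split_colorings_def by auto
  moreover have "finite (split_colorings V' E' wt' C\<^sub>1 C\<^sub>2 b w)"
    using finite_colorings_on[OF simple_graph_finite[OF assms(2)], of "C\<^sub>1 \<union> C\<^sub>2" E'] C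
    unfolding split_colorings_def by auto
  ultimately show ?thesis
    using cm unfolding split_colorings_by_profile[OF assms(1) C(1,2)]
      split_colorings_by_profile[OF assms(2) C(1,2)]
    by (intro chromatic_macmahon_determines_card)
qed

definition weighted_subsets :: "'a set \<Rightarrow> ('a \<Rightarrow> nat) \<Rightarrow> nat \<Rightarrow> nat \<Rightarrow> 'a set set" where
  "weighted_subsets V wt b w = {A. A \<subseteq> V \<and> card A = b \<and> sum wt A = w}"

lemma finite_weighted_subsets: "finite V \<Longrightarrow> finite (weighted_subsets V wt b w)"
  unfolding weighted_subsets_def by (auto intro: rev_finite_subset[of "Pow V"])

lemma card_colorings_on_split:
  assumes A: "A \<subseteq> V" and C: "C\<^sub>1 \<inter> C\<^sub>2 = {}"
  shows "card {\<kappa> \<in> colorings_on E V (C\<^sub>1 \<union> C\<^sub>2). {v \<in> V. \<kappa> v \<in> C\<^sub>1} = A} =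
           card (colorings_on E A C\<^sub>1) * card (colorings_on E (V - A) C\<^sub>2)"
proof -
  let ?S = "{\<kappa> \<in> colorings_on E V (C\<^sub>1 \<union> C\<^sub>2). {v \<in> V. \<kappa> v \<in> C\<^sub>1} = A}"
  let ?P = "colorings_on E A C\<^sub>1 \<times> colorings_on E (V - A) C\<^sub>2"
  let ?merge = "\<lambda>(\<kappa>\<^sub>1, \<kappa>\<^sub>2) v. if v \<in> A then \<kappa>\<^sub>1 v else \<kappa>\<^sub>2 v"
  have "bij_betw (\<lambda>\<kappa>. (restrict \<kappa> A, restrict \<kappa> (V - A))) ?S ?P"
  proof (rule bij_betw_byWitness[where f' = ?merge])
    show "(\<lambda>\<kappa>. (restrict \<kappa> A, restrict \<kappa> (V - A))) ` ?S \<subseteq> ?P"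
    proof (rule image_subsetI)
      fix \<kappa> assume \<kappa>: "\<kappa> \<in> ?S"
      then have "restrict \<kappa> A \<in> colorings_on E A C\<^sub>1"
        using A unfolding colorings_on_def by auto
      moreover have "restrict \<kappa> (V - A) \<in> colorings_on E (V - A) C\<^sub>2"
        using \<kappa> unfolding colorings_on_def by (auto simp: PiE_iff)
      ultimately show "(restrict \<kappa> A, restrict \<kappa> (V - A)) \<in> ?P" by blast
    qed
    show "?merge ` ?P \<subseteq> ?S"
    proof (rule image_subsetI)
      fix p assume "p \<in> ?P"
      then obtain \<kappa>\<^sub>1 \<kappa>\<^sub>2 where p: "p = (\<kappa>\<^sub>1, \<kappa>\<^sub>2)"
        and \<kappa>: "\<kappa>\<^sub>1 \<in> colorings_on E A C\<^sub>1" "\<kappa>\<^sub>2 \<in> colorings_on E (V - A) C\<^sub>2" by blast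
      let ?\<kappa> = "\<lambda>v. if v \<in> A then \<kappa>\<^sub>1 v else \<kappa>\<^sub>2 v"
      have "?\<kappa> \<in> V \<rightarrow>\<^sub>E C\<^sub>1 \<union> C\<^sub>2"
        using \<kappa> A unfolding colorings_on_def by (auto simp: PiE_iff extensional_def)
      moreover have "?\<kappa> u \<noteq> ?\<kappa> v" if "{u, v} \<in> E" "u \<in> V" "v \<in> V" for u v
        using \<kappa> C that unfolding colorings_on_def by (auto simp: PiE_iff) (metis Diff_iff disjoint_iff)+
      moreover have "{v \<in> V. ?\<kappa> v \<in> C\<^sub>1} = A"
        using \<kappa> A C unfolding colorings_on_def by (auto simp: PiE_iff)
      ultimately have "?\<kappa> \<in> ?S" unfolding colorings_on_def by blast
      then show "?merge p \<in> ?S" by (simp add: p)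
    qed
  qed (use A in \<open>auto simp: colorings_on_def PiE_iff extensional_def\<close>)
  then show ?thesis by (simp add: bij_betw_same_card card_cartesian_product)
qed

lemma card_split_colorings:
  assumes V: "finite V" and C: "finite C\<^sub>1" "finite C\<^sub>2" "C\<^sub>1 \<inter> C\<^sub>2 = {}"
  shows "card (split_colorings V E wt C\<^sub>1 C\<^sub>2 b w) =
    (\<Sum>A\<in>weighted_subsets V wt b w. card (colorings_on E A C\<^sub>1) * card (colorings_on E (V - A) C\<^sub>2))"
proof -
  let ?piece = "\<lambda>A. {\<kappa> \<in> colorings_on E V (C\<^sub>1 \<union> C\<^sub>2). {v \<in> V. \<kappa> v \<in> C\<^sub>1} = A}"
  have "split_colorings V E wt C\<^sub>1 C\<^sub>2 b w = (\<Union>A\<in>weighted_subsets V wt b w. ?piece A)"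
    unfolding split_colorings_def weighted_subsets_def by auto
  moreover have "finite (?piece A)" for A
    using finite_colorings_on[OF V, of "C\<^sub>1 \<union> C\<^sub>2" E] C by auto
  ultimately have "card (split_colorings V E wt C\<^sub>1 C\<^sub>2 b w) = (\<Sum>A\<in>weighted_subsets V wt b w. card (?piece A))"
    using finite_weighted_subsets[OF V] by (simp only:) (intro card_UN_disjoint; blast)
  also have "\<dots> = (\<Sum>A\<in>weighted_subsets V wt b w.
      card (colorings_on E A C\<^sub>1) * card (colorings_on E (V - A) C\<^sub>2))"
    using card_colorings_on_split[OF _ C(3)] by (intro sum.cong) (auto simp: weighted_subsets_def)
  finally show ?thesis .
qed

lemma sum_group_pairs:
  fixes h :: "nat \<Rightarrow> nat \<Rightarrow> 'b::semiring_1"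
  assumes "finite X" and "\<And>x. x \<in> X \<Longrightarrow> f x \<le> L \<and> g x \<le> L"
  shows "(\<Sum>x\<in>X. h (f x) (g x)) =
           (\<Sum>i\<le>L. \<Sum>j\<le>L. of_nat (card {x \<in> X. f x = i \<and> g x = j}) * h i j)"
proof -
  have "(\<Sum>x\<in>X. h (f x) (g x)) = (\<Sum>i\<le>L. \<Sum>x\<in>{x \<in> X. f x = i}. h (f x) (g x))"
    using assms by (intro sum.group[symmetric]) auto
  also have "\<dots> = (\<Sum>i\<le>L. \<Sum>j\<le>L. \<Sum>x\<in>{x \<in> {x \<in> X. f x = i}. g x = j}. h (f x) (g x))"
    using assms by (intro sum.cong refl sum.group[symmetric]) auto
  also have "\<dots> = (\<Sum>i\<le>L. \<Sum>j\<le>L. of_nat (card {x \<in> X. f x = i \<and> g x = j}) * h i j)"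
  proof (intro sum.cong refl)
    fix i j
    have "{x \<in> {x \<in> X. f x = i}. g x = j} = {x \<in> X. f x = i \<and> g x = j}" by auto
    moreover have "(\<Sum>x\<in>{x \<in> X. f x = i \<and> g x = j}. h (f x) (g x)) =
        (\<Sum>x\<in>{x \<in> X. f x = i \<and> g x = j}. h i j)" by (rule sum.cong) auto
    ultimately show "(\<Sum>x\<in>{x \<in> {x \<in> X. f x = i}. g x = j}. h (f x) (g x)) =
        of_nat (card {x \<in> X. f x = i \<and> g x = j}) * h i j" by simp
  qed
  finally show ?thesis .
qed

lemma polyfun_eq_coeffs_on_infinite:
  fixes c d :: "nat \<Rightarrow> 'a::{idom,real_normed_div_algebra}"
  assumes "infinite S" and "\<And>x. x \<in> S \<Longrightarrow> (\<Sum>i\<le>n. c i * x ^ i) = (\<Sum>i\<le>n. d i * x ^ i)"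
  shows "\<forall>i\<le>n. c i = d i"
proof (rule ccontr)
  assume "\<not> (\<forall>i\<le>n. c i = d i)"
  then have "finite {x. (\<Sum>i\<le>n. (c i - d i) * x ^ i) = 0}"
    by (subst polyfun_finite_roots) auto
  moreover have "S \<subseteq> {x. (\<Sum>i\<le>n. (c i - d i) * x ^ i) = 0}"
    using assms(2) by (auto simp: left_diff_distrib sum_subtractf)
  ultimately show False using assms(1) finite_subset by blast
qed

lemma polyfun2_eq_coeffs_on_infinite:
  fixes c d :: "nat \<Rightarrow> nat \<Rightarrow> 'a::{idom,real_normed_div_algebra}"
  assumes S: "infinite S"
    and eq: "\<And>x y. x \<in> S \<Longrightarrow> y \<in> S \<Longrightarrow>
      (\<Sum>i\<le>n. \<Sum>j\<le>n. c i j * (x ^ i * y ^ j)) = (\<Sum>i\<le>n. \<Sum>j\<le>n. d i j * (x ^ i * y ^ j))"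
    and "i \<le> n" "j \<le> n"
  shows "c i j = d i j"
proof -
  have swap: "(\<Sum>i\<le>n. \<Sum>j\<le>n. c i j * (x ^ i * y ^ j)) = (\<Sum>i\<le>n. (\<Sum>j\<le>n. c i j * y ^ j) * x ^ i)"
    for c :: "nat \<Rightarrow> nat \<Rightarrow> 'a" and x y
    by (simp add: sum_distrib_left sum_distrib_right mult_ac)
  have "\<forall>i\<le>n. (\<Sum>j\<le>n. c i j * y ^ j) = (\<Sum>j\<le>n. d i j * y ^ j)" if "y \<in> S" for y
    using eq[OF _ that] by (intro polyfun_eq_coeffs_on_infinite[OF S]) (simp add: swap)
  then have "\<forall>j\<le>n. c i j = d i j"
    using \<open>i \<le> n\<close> by (intro polyfun_eq_coeffs_on_infinite[OF S]) blast
  then show ?thesis using \<open>j \<le> n\<close> by blast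
qed

lemma infinite_one_minus_inverses: "infinite ((\<lambda>r::nat. 1 - 1 / real r) ` {1..})"
proof
  assume "finite ((\<lambda>r::nat. 1 - 1 / real r) ` {1..})"
  moreover have "inj_on (\<lambda>r::nat. 1 - 1 / real r) {1..}"
    by (auto intro!: inj_onI)
  ultimately show False
    using finite_imageD infinite_Ici by blast
qed

lemma real_power_diff_mult_pred_power:
  assumes "1 \<le> r" "i \<le> t"
  shows "real (r ^ (t - i) * (r - 1) ^ i) = real r ^ t * (1 - 1 / real r) ^ i"
proof -
  have "real r ^ t * (1 - 1 / real r) ^ i = real r ^ (t - i) * (real r * (1 - 1 / real r)) ^ i"
    using assms(2) by (simp add: power_mult_distrib flip: power_add)
  also have "real r * (1 - 1 / real r) = real (r - 1)"
    using assms(1) by (simp add: of_nat_diff field_simps)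
  finally show ?thesis by simp
qed

definition bipartition_count ::
    "'a set \<Rightarrow> 'a set set \<Rightarrow> ('a \<Rightarrow> nat) \<Rightarrow> nat \<Rightarrow> nat \<Rightarrow> nat \<Rightarrow> nat \<Rightarrow> nat" where
  "bipartition_count V E wt b w i j =
     card {A \<in> weighted_subsets V wt b w. int_edges E A = i \<and> int_edges E (V - A) = j}"

lemma real_card_split_colorings_forest:
  assumes F: "forest V E" and C: "finite C\<^sub>1" "finite C\<^sub>2" "C\<^sub>1 \<inter> C\<^sub>2 = {}" "C\<^sub>1 \<noteq> {}" "C\<^sub>2 \<noteq> {}"
    and L: "card E \<le> L"
  shows "real (card (split_colorings V E wt C\<^sub>1 C\<^sub>2 b w)) =
    real (card C\<^sub>1) ^ b * real (card C\<^sub>2) ^ (card V - b) *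
    (\<Sum>i\<le>L. \<Sum>j\<le>L. real (bipartition_count V E wt b w i j) *
        ((1 - 1 / real (card C\<^sub>1)) ^ i * (1 - 1 / real (card C\<^sub>2)) ^ j))"
proof -
  have G: "simple_graph V E" using F by (rule forest_simple_graph)
  have V: "finite V" using G by (rule simple_graph_finite)
  define r\<^sub>1 r\<^sub>2 where "r\<^sub>1 = card C\<^sub>1" and "r\<^sub>2 = card C\<^sub>2"
  have r: "1 \<le> r\<^sub>1" "1 \<le> r\<^sub>2" using C unfolding r\<^sub>1_def r\<^sub>2_def by (simp_all add: Suc_le_eq card_gt_0_iff)
  define u\<^sub>1 u\<^sub>2 where "u\<^sub>1 = 1 - 1 / real r\<^sub>1" and "u\<^sub>2 = 1 - 1 / real r\<^sub>2"
  have summand: "real (card (colorings_on E A C\<^sub>1) * card (colorings_on E (V - A) C\<^sub>2)) =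
      real r\<^sub>1 ^ b * real r\<^sub>2 ^ (card V - b) * (u\<^sub>1 ^ int_edges E A * u\<^sub>2 ^ int_edges E (V - A))"
    if A: "A \<in> weighted_subsets V wt b w" for A
  proof -
    have "A \<subseteq> V" "card A = b" using A unfolding weighted_subsets_def by auto
    have "card (V - A) = card V - b"
      using \<open>A \<subseteq> V\<close> \<open>card A = b\<close> V by (simp add: card_Diff_subset finite_subset)
    have "V - A \<subseteq> V" by blast
    have "real (card (colorings_on E A C\<^sub>1)) = real r\<^sub>1 ^ b * u\<^sub>1 ^ int_edges E A"
      using card_colorings_on_forest[OF F \<open>A \<subseteq> V\<close> C(1)] \<open>card A = b\<close>
        real_power_diff_mult_pred_power[OF r(1) forest_int_edges_le_card[OF F \<open>A \<subseteq> V\<close>]]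
      unfolding r\<^sub>1_def u\<^sub>1_def by simp
    moreover have "real (card (colorings_on E (V - A) C\<^sub>2)) =
        real r\<^sub>2 ^ (card V - b) * u\<^sub>2 ^ int_edges E (V - A)"
      using card_colorings_on_forest[OF F \<open>V - A \<subseteq> V\<close> C(2)] \<open>card (V - A) = card V - b\<close>
        real_power_diff_mult_pred_power[OF r(2) forest_int_edges_le_card[OF F \<open>V - A \<subseteq> V\<close>]]
      unfolding r\<^sub>2_def u\<^sub>2_def by simp
    ultimately show ?thesis by (simp add: mult_ac)
  qed
  have "real (card (split_colorings V E wt C\<^sub>1 C\<^sub>2 b w)) = real r\<^sub>1 ^ b * real r\<^sub>2 ^ (card V - b) *
      (\<Sum>A\<in>weighted_subsets V wt b w. u\<^sub>1 ^ int_edges E A * u\<^sub>2 ^ int_edges E (V - A))"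
    unfolding card_split_colorings[OF V C(1-3)] of_nat_sum sum_distrib_left
    by (intro sum.cong refl summand)
  also have "(\<Sum>A\<in>weighted_subsets V wt b w. u\<^sub>1 ^ int_edges E A * u\<^sub>2 ^ int_edges E (V - A)) =
      (\<Sum>i\<le>L. \<Sum>j\<le>L. real (bipartition_count V E wt b w i j) * (u\<^sub>1 ^ i * u\<^sub>2 ^ j))"
    unfolding bipartition_count_def
    using finite_weighted_subsets[OF V] order.trans[OF int_edges_le_card_edges[OF G] L]
    by (intro sum_group_pairs) auto
  finally show ?thesis unfolding r\<^sub>1_def r\<^sub>2_def u\<^sub>1_def u\<^sub>2_def .
qed

lemma split_colorings_no_second_colors:
  "split_colorings V E wt C {} b w =
     (if b = card V \<and> w = sum wt V then colorings_on E V C else {})"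
proof -
  have "{v \<in> V. \<kappa> v \<in> C} = V" if "\<kappa> \<in> colorings_on E V C" for \<kappa>
    using that unfolding colorings_on_def by auto
  then show ?thesis unfolding split_colorings_def by auto
qed

lemma forest_colorings_on_two_colors:
  assumes "forest V E" "card C = 2"
  shows "colorings_on E V C \<noteq> {}"
proof -
  have "finite C" using assms(2) card.infinite by fastforce
  then have "card (colorings_on E V C) \<noteq> 0"
    using card_colorings_on_forest[OF assms(1) order_refl \<open>finite C\<close>] assms(2) by simp
  then show ?thesis by force
qed

lemma chromatic_macmahon_determines_card_vertices:
  assumes F: "forest V E" and F': "forest V' E'"
    and cm: "chromatic_macmahon V E wt = chromatic_macmahon V' E' wt'"
  shows "card V' = card V"
proof -
  let ?C = "{1, 2} :: nat set"
  have G: "simple_graph V E" and G': "simple_graph V' E'"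
    using F F' by (simp_all add: forest_simple_graph)
  have "split_colorings V E wt ?C {} (card V) (sum wt V) \<noteq> {}"
    using forest_colorings_on_two_colors[OF F, of ?C] by (simp add: split_colorings_no_second_colors)
  then have "card (split_colorings V E wt ?C {} (card V) (sum wt V)) \<noteq> 0"
    using finite_colorings_on[OF simple_graph_finite[OF G], of ?C E]
    by (simp add: split_colorings_no_second_colors)
  then have "card (split_colorings V' E' wt' ?C {} (card V) (sum wt V)) \<noteq> 0"
    using card_split_colorings_transfer[OF G G' cm, of ?C "{}"] by simp
  then show ?thesis by (auto simp: split_colorings_no_second_colors split: if_splits)
qed

lemma chromatic_macmahon_determines_bipartition_polynomial:
  assumes F: "forest V E" and F': "forest V' E'"
    and cm: "chromatic_macmahon V E wt = chromatic_macmahon V' E' wt'"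
    and L: "card E \<le> L" "card E' \<le> L" and r: "1 \<le> r\<^sub>1" "1 \<le> r\<^sub>2"
  shows "(\<Sum>i\<le>L. \<Sum>j\<le>L. real (bipartition_count V E wt b w i j) *
            ((1 - 1 / real r\<^sub>1) ^ i * (1 - 1 / real r\<^sub>2) ^ j)) =
         (\<Sum>i\<le>L. \<Sum>j\<le>L. real (bipartition_count V' E' wt' b w i j) *
            ((1 - 1 / real r\<^sub>1) ^ i * (1 - 1 / real r\<^sub>2) ^ j))"
proof -
  have G: "simple_graph V E" and G': "simple_graph V' E'"
    using F F' by (simp_all add: forest_simple_graph)
  have n: "card V' = card V" using chromatic_macmahon_determines_card_vertices[OF F F' cm] .
  let ?C\<^sub>1 = "{1..r\<^sub>1}" and ?C\<^sub>2 = "{r\<^sub>1 + 1..r\<^sub>1 + r\<^sub>2}"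
  have C: "finite ?C\<^sub>1" "finite ?C\<^sub>2" "?C\<^sub>1 \<inter> ?C\<^sub>2 = {}" "?C\<^sub>1 \<noteq> {}" "?C\<^sub>2 \<noteq> {}"
    using r by auto
  have "card (split_colorings V E wt ?C\<^sub>1 ?C\<^sub>2 b w) = card (split_colorings V' E' wt' ?C\<^sub>1 ?C\<^sub>2 b w)"
    by (rule card_split_colorings_transfer[OF G G' cm]) auto
  then show ?thesis
    using real_card_split_colorings_forest[OF F C L(1), of wt b w]
      real_card_split_colorings_forest[OF F' C L(2), of wt' b w] r
    by (simp add: n)
qed

lemma chromatic_macmahon_determines_bipartition_count:
  assumes F: "forest V E" and F': "forest V' E'"
    and cm: "chromatic_macmahon V E wt = chromatic_macmahon V' E' wt'"
  shows "bipartition_count V E wt b w i j = bipartition_count V' E' wt' b w i j"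
proof -
  define L where "L = card E + card E' + i + j"
  have "(\<Sum>i\<le>L. \<Sum>j\<le>L. real (bipartition_count V E wt b w i j) * (x ^ i * y ^ j)) =
        (\<Sum>i\<le>L. \<Sum>j\<le>L. real (bipartition_count V' E' wt' b w i j) * (x ^ i * y ^ j))"
    if "x \<in> (\<lambda>r::nat. 1 - 1 / real r) ` {1..}" "y \<in> (\<lambda>r::nat. 1 - 1 / real r) ` {1..}" for x y
    using that chromatic_macmahon_determines_bipartition_polynomial[OF F F' cm, of L]
    by (auto simp: L_def)
  then have "real (bipartition_count V E wt b w i j) = real (bipartition_count V' E' wt' b w i j)"
    by (rule polyfun2_eq_coeffs_on_infinite[OF infinite_one_minus_inverses]) (simp_all add: L_def)
  then show ?thesis by simp
qed

lemma bipartition_count_empty: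
  assumes "simple_graph V E"
  shows "bipartition_count V E wt 0 0 0 j = (if j = card E then 1 else 0)"
proof -
  have "weighted_subsets V wt 0 0 = {{}}"
    using simple_graph_finite[OF assms] unfolding weighted_subsets_def
    by (auto simp: card_eq_0_iff dest: finite_subset)
  then have "{A \<in> weighted_subsets V wt 0 0. P A} = (if P {} then {{}} else {})" for P
    by auto
  then show ?thesis
    unfolding bipartition_count_def by (simp add: int_edges_empty[OF assms] int_edges_all[OF assms])
qed

lemma card_doubleton_inter_eq_1:
  "x \<noteq> y \<Longrightarrow> card ({x, y} \<inter> A) = 1 \<longleftrightarrow> (x \<in> A \<longleftrightarrow> y \<notin> A)"
  by (cases "x \<in> A"; cases "y \<in> A") (auto simp: Int_insert_left)

lemma edges_split_by_subset:
  assumes G: "simple_graph V E" and "A \<subseteq> V"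
  shows "ext_edges E A + int_edges E A + int_edges E (V - A) = card E"
proof -
  let ?X = "{e \<in> E. card (e \<inter> A) = 1}" and ?Y = "{e \<in> E. e \<subseteq> A}" and ?Z = "{e \<in> E. e \<subseteq> V - A}"
  have "(e \<in> ?X \<or> e \<in> ?Y \<or> e \<in> ?Z) \<and> \<not> (e \<in> ?X \<and> e \<in> ?Y) \<and> \<not> ((e \<in> ?X \<or> e \<in> ?Y) \<and> e \<in> ?Z)"
    if "e \<in> E" for e
  proof -
    obtain x y where "x \<in> V" "y \<in> V" "x \<noteq> y" "e = {x, y}"
      using G \<open>e \<in> E\<close> by (rule simple_graph_edgeE)
    then show ?thesis using that card_doubleton_inter_eq_1[of x y A] by auto
  qed
  then have "E = (?X \<union> ?Y) \<union> ?Z" "?X \<inter> ?Y = {}" "(?X \<union> ?Y) \<inter> ?Z = {}"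
    by blast+
  moreover have "finite E" using G by (rule simple_graph_finite_edges)
  ultimately show ?thesis
    unfolding ext_edges_def int_edges_def
    by (metis (no_types, lifting) card_Un_disjoint finite_Un)
qed

lemma ext_gen_degree_poly_eq_bipartition_count:
  assumes G: "simple_graph V E"
  shows "ext_gen_degree_poly V E wt (a, b, c, d) =
    (if d + a \<le> card E then bipartition_count V E wt b c d (card E - d - a) else 0)"
proof -
  have "ext_edges E A = a \<and> int_edges E A = d \<longleftrightarrow>
      int_edges E A = d \<and> int_edges E (V - A) + d + a = card E" if "A \<subseteq> V" for A
    using edges_split_by_subset[OF G that] by linarith
  then have "{A. A \<subseteq> V \<and> ext_edges E A = a \<and> card A = b \<and> sum wt A = c \<and> int_edges E A = d} =
      {A \<in> weighted_subsets V wt b c. int_edges E A = d \<and> int_edges E (V - A) + d + a = card E}"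
    unfolding weighted_subsets_def by (intro Collect_cong) blast
  then show ?thesis
    unfolding ext_gen_degree_poly_def bipartition_count_def
    by (auto intro!: arg_cong[where f = card])
qed

theorem theorem1p1:
  fixes V :: "'a set" and E :: "'a set set" and wt :: "'a \<Rightarrow> nat"
    and V' :: "'b set" and E' :: "'b set set" and wt' :: "'b \<Rightarrow> nat"
  assumes "weighted_forest V E wt"
    and "weighted_forest V' E' wt'"
    and "chromatic_macmahon V E wt = chromatic_macmahon V' E' wt'"
  shows "ext_gen_degree_poly V E wt = ext_gen_degree_poly V' E' wt'"
proof
  fix p :: "nat \<times> nat \<times> nat \<times> nat"
  obtain a b c d where p: "p = (a, b, c, d)" by (cases p)
  have F: "forest V E" and F': "forest V' E'"
    using assms(1,2) unfolding weighted_forest_def by simp_all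
  have G: "simple_graph V E" and G': "simple_graph V' E'"
    using F F' by (simp_all add: forest_simple_graph)
  note count = chromatic_macmahon_determines_bipartition_count[OF F F' assms(3)]
  have "card E' = card E"
    using count[of 0 0 0 "card E"]
    by (simp add: bipartition_count_empty[OF G] bipartition_count_empty[OF G'] split: if_splits)
  then show "ext_gen_degree_poly V E wt p = ext_gen_degree_poly V' E' wt' p"
    unfolding p ext_gen_degree_poly_eq_bipartition_count[OF G] ext_gen_degree_poly_eq_bipartition_count[OF G']
    by (simp add: count)
qed

end
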